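(* Let $k$ be a symmetric positive semidefinite kernel on $\mathbb{R}^d$, $\sigma_n^2>0$, and let $\mathbb{D}_N^x=\{\bm{x}^{(i)}\}_{i=1}^N$ be an input training data set with GP posterior variance $\sigma_N^2(\cdot)$. For $\bm{x}\in\mathbb{R}^d$ and $\rho>0$ let $\mathbb{B}_\rho(\bm{x})=\{\bm{x}'\in\mathbb{D}_N^x:\|\bm{x}'-\bm{x}\|\le\rho\}$ and suppose $|\mathbb{B}_\rho(\bm{x})|\ge1$. Then $$\sigma_N^2(\bm{x})\le\frac{k(\bm{x},\bm{x})\sigma_n^2+|\mathbb{B}_\rho(\bm{x})|\,\xi(\bm{x},\rho)}{|\mathbb{B}_\rho(\bm{x})|\max_{\bm{x}',\bm{x}''\in\mathbb{B}_\rho(\bm{x})}k(\bm{x}',\bm{x}'')+\sigma_n^2},$$ where $\xi(\bm{x},\rho)=k(\bm{x},\bm{x})\max_{\bm{x}',\bm{x}''\in\mathbb{B}_\rho(\bm{x})}k(\bm{x}',\bm{x}'')-\min_{\bm{x}'\in\mathbb{B}_\rho(\bm{x})}k(\bm{x}',\bm{x})^2$.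
   Context: Gaussian process posterior variance: with $K_{N,ij}=k(\bm{x}^{(i)},\bm{x}^{(j)})$, $k_{N,i}(\bm{x})=k(\bm{x},\bm{x}^{(i)})$, $\bm{A}_N=\bm{K}_N+\sigma_n^2\bm{I}_N$, $\sigma_N^2(\bm{x})=k(\bm{x},\bm{x})-\bm{k}_N(\bm{x})^T\bm{A}_N^{-1}\bm{k}_N(\bm{x})$. $|\cdot|$ denotes cardinality (counted with multiplicity). *)

theory Defs
  imports "HOL-Analysis.Analysis"
begin

definition psd_kernel :: "(real^'d \<Rightarrow> real^'d \<Rightarrow> real) \<Rightarrow> bool" where
  "psd_kernel k \<longleftrightarrow>
     (\<forall>x y. k x y = k y x) \<and>
     (\<forall>(n::nat) (p::nat \<Rightarrow> real^'d) (c::nat \<Rightarrow> real).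
        0 \<le> (\<Sum>i<n. \<Sum>j<n. c i * c j * k (p i) (p j)))"

definition gram :: "(real^'d \<Rightarrow> real^'d \<Rightarrow> real) \<Rightarrow> ('n::finite \<Rightarrow> real^'d) \<Rightarrow> real^'n^'n" where
  "gram k X = (\<chi> i j. k (X i) (X j))"

definition kvec :: "(real^'d \<Rightarrow> real^'d \<Rightarrow> real) \<Rightarrow> ('n::finite \<Rightarrow> real^'d) \<Rightarrow> real^'d \<Rightarrow> real^'n" where
  "kvec k X x = (\<chi> i. k x (X i))"

definition post_var :: "(real^'d \<Rightarrow> real^'d \<Rightarrow> real) \<Rightarrow> real \<Rightarrow> ('n::finite \<Rightarrow> real^'d) \<Rightarrow> real^'d \<Rightarrow> real" where
  "post_var k sn2 X x =
     k x x - kvec k X x \<bullet> (matrix_inv (gram k X + sn2 *\<^sub>R mat 1) *v kvec k X x)"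

(* indices of training points in the closed ball of radius rho around x (multiplicity kept) *)
definition ball_idx :: "('n::finite \<Rightarrow> real^'d) \<Rightarrow> real^'d \<Rightarrow> real \<Rightarrow> 'n set" where
  "ball_idx X x \<rho> = {i. norm (X i - x) \<le> \<rho>}"

definition kmax_ball :: "(real^'d \<Rightarrow> real^'d \<Rightarrow> real) \<Rightarrow> ('n::finite \<Rightarrow> real^'d) \<Rightarrow> real^'d \<Rightarrow> real \<Rightarrow> real" where
  "kmax_ball k X x \<rho> = Max {k (X i) (X j) | i j. i \<in> ball_idx X x \<rho> \<and> j \<in> ball_idx X x \<rho>}"

definition xi :: "(real^'d \<Rightarrow> real^'d \<Rightarrow> real) \<Rightarrow> ('n::finite \<Rightarrow> real^'d) \<Rightarrow> real^'d \<Rightarrow> real \<Rightarrow> real" where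
  "xi k X x \<rho> = k x x * kmax_ball k X x \<rho> - Min {(k (X i) x)^2 | i. i \<in> ball_idx X x \<rho>}"

end

theory Submission
  imports Defs
begin

text \<open>
  For a symmetric positive definite matrix \<open>A\<close>, the quadratic form \<open>v\<^sup>T A\<^sup>-\<^sup>1 v\<close> is the
  maximum of \<open>2 a\<^sup>T v - a\<^sup>T A a\<close> over test vectors \<open>a\<close>, so every test vector yields an
  upper bound on the posterior variance. Choosing \<open>a\<^sub>i = t sgn k(x, x\<^sup>(\<^sup>i\<^sup>))\<close> on the training
  points of the ball and \<open>a\<^sub>i = 0\<close> elsewhere, each kernel value in the ball is bounded by its
  maximum and each \<open>|k(x, x\<^sup>(\<^sup>i\<^sup>))|\<close> from below by its minimum; optimising over \<open>t\<close> gives the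
  bound.
\<close>

lemma psd_kernel_sym:
  assumes "psd_kernel k"
  shows "k a b = k b a"
  using assms unfolding psd_kernel_def by blast

lemma psd_kernel_quadratic_form_nonneg:
  fixes X :: "'n::finite \<Rightarrow> real^'d" and c :: "'n \<Rightarrow> real"
  assumes "psd_kernel k"
  shows "0 \<le> (\<Sum>i\<in>UNIV. \<Sum>j\<in>UNIV. c i * c j * k (X i) (X j))"
proof -
  obtain h where h: "bij_betw h {..<CARD('n)} (UNIV::'n set)"
    using ex_bij_betw_nat_finite[of "UNIV::'n set"] by (auto simp: atLeast0LessThan)
  have reindex: "(\<Sum>i\<in>UNIV. f i) = (\<Sum>a<CARD('n). f (h a))" for f :: "'n \<Rightarrow> real"
    using sum.reindex_bij_betw[OF h, of f] by simp
  have "0 \<le> (\<Sum>a<CARD('n). \<Sum>b<CARD('n). (c \<circ> h) a * (c \<circ> h) b * k ((X \<circ> h) a) ((X \<circ> h) b))"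
    using assms unfolding psd_kernel_def by blast
  then show ?thesis by (simp add: reindex)
qed

lemma psd_kernel_diag_nonneg:
  assumes "psd_kernel k"
  shows "0 \<le> k a a"
  using psd_kernel_quadratic_form_nonneg[OF assms, of "\<lambda>_::unit. 1" "\<lambda>_. a"] by simp

lemma psd_kernel_abs_le:
  assumes "psd_kernel k"
  shows "2 * \<bar>k a b\<bar> \<le> k a a + k b b"
proof -
  have "0 \<le> k a a + 2 * s * k a b + s * s * k b b" for s
    using psd_kernel_quadratic_form_nonneg[OF assms, of "\<lambda>i. if i then 1 else s" "\<lambda>i. if i then a else b"]
    by (simp add: UNIV_bool psd_kernel_sym[OF assms, of b a] algebra_simps)
  from this[of 1] this[of "-1"] show ?thesis by (simp add: abs_if)
qed

lemma inner_matrix_vector_mult: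
  fixes M :: "real^'n^'n"
  shows "a \<bullet> (M *v b) = (\<Sum>i\<in>UNIV. \<Sum>j\<in>UNIV. a$i * b$j * M$i$j)"
  by (simp add: inner_vec_def matrix_vector_mult_def sum_distrib_left ac_simps)

lemma pos_def_matrix_inv_right:
  fixes M :: "real^'n^'n"
  assumes pd: "\<And>u. u \<noteq> 0 \<Longrightarrow> 0 < u \<bullet> (M *v u)"
  shows "M ** matrix_inv M = mat 1"
proof -
  have "\<forall>u. M *v u = 0 \<longrightarrow> u = 0"
    using pd by fastforce
  then have "invertible M"
    by (simp add: invertible_left_inverse matrix_left_invertible_ker)
  then show ?thesis
    unfolding invertible_def matrix_inv_def by (rule someI2_ex) auto
qed

lemma inverse_quadratic_form_ge:
  fixes M :: "real^'n^'n"
  assumes sym: "\<And>i j. M$i$j = M$j$i"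
    and pd: "\<And>u. u \<noteq> 0 \<Longrightarrow> 0 < u \<bullet> (M *v u)"
  shows "2 * (a \<bullet> v) - a \<bullet> (M *v a) \<le> v \<bullet> (matrix_inv M *v v)"
proof -
  define w where "w = matrix_inv M *v v"
  have Mw: "M *v w = v"
    unfolding w_def by (simp add: matrix_vector_mul_assoc pos_def_matrix_inv_right[OF pd])
  have swap: "w \<bullet> (M *v a) = a \<bullet> (M *v w)"
    unfolding inner_matrix_vector_mult using sym by (subst sum.swap) (simp add: ac_simps)
  have "0 \<le> (w - a) \<bullet> (M *v (w - a))"
    using pd[of "w - a"] by fastforce
  also have "\<dots> = w \<bullet> v - w \<bullet> (M *v a) - a \<bullet> v + a \<bullet> (M *v a)"
    by (simp add: matrix_vector_mult_diff_distrib inner_diff_left inner_diff_right Mw)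
  finally have "2 * (a \<bullet> v) - a \<bullet> (M *v a) \<le> w \<bullet> v"
    unfolding swap Mw by simp
  then show ?thesis
    unfolding w_def by (simp add: inner_commute)
qed

lemma inner_regularized_gram:
  "u \<bullet> ((gram k X + sn2 *\<^sub>R mat 1) *v u)
     = (\<Sum>i\<in>UNIV. \<Sum>j\<in>UNIV. u$i * u$j * k (X i) (X j)) + sn2 * (u \<bullet> u)"
  by (simp add: matrix_vector_mult_add_rdistrib inner_add_right
      scaleR_matrix_vector_assoc[symmetric] inner_matrix_vector_mult gram_def)

lemma regularized_gram_pos_def:
  assumes "psd_kernel k" and "sn2 > 0" and "u \<noteq> 0"
  shows "0 < u \<bullet> ((gram k X + sn2 *\<^sub>R mat 1) *v u)"
  using psd_kernel_quadratic_form_nonneg[OF assms(1), of "\<lambda>i. u$i" X] assms(2,3)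
  by (simp add: inner_regularized_gram add_nonneg_pos)

lemma post_var_le_test_vector:
  assumes "psd_kernel k" and "sn2 > 0"
  shows "post_var k sn2 X x
           \<le> k x x - (2 * (a \<bullet> kvec k X x) - a \<bullet> ((gram k X + sn2 *\<^sub>R mat 1) *v a))"
proof -
  have "2 * (a \<bullet> kvec k X x) - a \<bullet> ((gram k X + sn2 *\<^sub>R mat 1) *v a)
          \<le> kvec k X x \<bullet> (matrix_inv (gram k X + sn2 *\<^sub>R mat 1) *v kvec k X x)"
    using regularized_gram_pos_def[OF assms]
    by (intro inverse_quadratic_form_ge) (auto simp: gram_def mat_def psd_kernel_sym[OF assms(1)])
  then show ?thesis
    unfolding post_var_def by linarith
qed

lemma inner_regularized_gram_le:
  fixes X :: "'n::finite \<Rightarrow> real^'d" and KM t sn2 :: real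
  assumes kB: "\<And>i j. i \<in> B \<Longrightarrow> j \<in> B \<Longrightarrow> \<bar>k (X i) (X j)\<bar> \<le> KM"
    and a_out: "\<And>i. i \<notin> B \<Longrightarrow> a$i = 0"
    and a_in: "\<And>i. i \<in> B \<Longrightarrow> \<bar>a$i\<bar> \<le> t"
    and "sn2 \<ge> 0"
  shows "a \<bullet> ((gram k X + sn2 *\<^sub>R mat 1) *v a) \<le> card B * t\<^sup>2 * (card B * KM + sn2)"
proof -
  have term_le: "a$i * a$j * k (X i) (X j) \<le> (if i \<in> B \<and> j \<in> B then t * t * KM else 0)" for i j
  proof (cases "i \<in> B \<and> j \<in> B")
    case True
    have "a$i * a$j * k (X i) (X j) \<le> \<bar>a$i\<bar> * \<bar>a$j\<bar> * \<bar>k (X i) (X j)\<bar>"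
      by (simp add: abs_mult[symmetric])
    also have "\<dots> \<le> t * t * KM"
      using True a_in kB by (intro mult_mono) (auto intro: order_trans[OF abs_ge_zero])
    finally show ?thesis using True by simp
  qed (auto simp: a_out)
  have "(\<Sum>i\<in>UNIV. \<Sum>j\<in>UNIV. a$i * a$j * k (X i) (X j))
          \<le> (\<Sum>i\<in>UNIV. \<Sum>j\<in>UNIV. if i \<in> B \<and> j \<in> B then t * t * KM else 0)"
    by (intro sum_mono term_le)
  also have "\<dots> = (\<Sum>i\<in>UNIV. if i \<in> B then (\<Sum>j\<in>UNIV. if j \<in> B then t * t * KM else 0) else 0)"
    by (intro sum.cong) auto
  also have "\<dots> = card B * card B * t\<^sup>2 * KM"
    by (simp add: sum.inter_restrict[symmetric] power2_eq_square)
  finally have gram_part: "(\<Sum>i\<in>UNIV. \<Sum>j\<in>UNIV. a$i * a$j * k (X i) (X j)) \<le> card B * card B * t\<^sup>2 * KM" .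
  have "a \<bullet> a = (\<Sum>i\<in>B. (a$i)\<^sup>2)"
    unfolding inner_vec_def inner_real_def power2_eq_square using a_out
    by (intro sum.mono_neutral_right) auto
  also have "\<dots> \<le> (\<Sum>i\<in>B. t\<^sup>2)"
    using a_in by (intro sum_mono) (metis abs_ge_zero abs_le_square_iff abs_of_nonneg order_trans)
  finally have "a \<bullet> a \<le> card B * t\<^sup>2" by simp
  with gram_part \<open>sn2 \<ge> 0\<close> show ?thesis
    unfolding inner_regularized_gram by (simp add: algebra_simps mult_left_mono add_mono)
qed

lemma post_var_le_ball_bound:
  fixes X :: "'n::finite \<Rightarrow> real^'d" and KM \<mu> sn2 :: real
  assumes psd: "psd_kernel k" and "sn2 > 0"
    and kB: "\<And>i j. i \<in> B \<Longrightarrow> j \<in> B \<Longrightarrow> k (X i) (X j) \<le> KM" and "0 \<le> KM"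
    and "0 \<le> \<mu>" and \<mu>B: "\<And>i. i \<in> B \<Longrightarrow> \<mu> \<le> \<bar>k x (X i)\<bar>"
  shows "post_var k sn2 X x \<le> k x x - card B * \<mu>\<^sup>2 / (card B * KM + sn2)"
proof -
  define D where "D = card B * KM + sn2"
  have "D > 0"
    unfolding D_def using \<open>0 \<le> KM\<close> \<open>sn2 > 0\<close> by (simp add: add_nonneg_pos)
  define t where "t = \<mu> / D"
  have "0 \<le> t"
    unfolding t_def using \<open>0 \<le> \<mu>\<close> \<open>D > 0\<close> by simp
  define a where "a = (\<chi> i. if i \<in> B then t * sgn (k x (X i)) else 0)"
  have "a \<bullet> kvec k X x = (\<Sum>i\<in>UNIV. if i \<in> B then t * \<bar>k x (X i)\<bar> else 0)"
    unfolding inner_vec_def a_def kvec_def by (intro sum.cong) (auto simp: abs_sgn)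
  also have "\<dots> = (\<Sum>i\<in>B. t * \<bar>k x (X i)\<bar>)"
    by (simp add: sum.inter_restrict[symmetric])
  also have "\<dots> \<ge> (\<Sum>i\<in>B. t * \<mu>)"
    using \<mu>B \<open>0 \<le> t\<close> by (intro sum_mono mult_left_mono)
  finally have linear_part: "card B * t * \<mu> \<le> a \<bullet> kvec k X x"
    by simp
  have "\<bar>k (X i) (X j)\<bar> \<le> KM" if "i \<in> B" "j \<in> B" for i j
    using psd_kernel_abs_le[OF psd, of "X i" "X j"] kB[OF that(1) that(1)] kB[OF that(2) that(2)]
    by linarith
  then have quadratic_part: "a \<bullet> ((gram k X + sn2 *\<^sub>R mat 1) *v a) \<le> card B * t\<^sup>2 * D"
    unfolding D_def using \<open>0 \<le> t\<close> \<open>sn2 > 0\<close>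
    by (intro inner_regularized_gram_le) (auto simp: a_def abs_mult abs_sgn_eq)
  have "post_var k sn2 X x \<le> k x x - (2 * (card B * t * \<mu>) - card B * t\<^sup>2 * D)"
    using post_var_le_test_vector[OF psd \<open>sn2 > 0\<close>, of X x a] linear_part quadratic_part
    by linarith
  also have "2 * (card B * t * \<mu>) - card B * t\<^sup>2 * D = card B * \<mu>\<^sup>2 / D"
    using \<open>D > 0\<close> by (simp add: t_def power2_eq_square field_simps)
  finally show ?thesis
    unfolding D_def .
qed

theorem mainTheorem10:
  fixes k :: "real^'d \<Rightarrow> real^'d \<Rightarrow> real"
    and X :: "'n::finite \<Rightarrow> real^'d"
    and sn2 \<rho> :: real and x :: "real^'d"
  assumes "psd_kernel k"
    and "sn2 > 0"
    and "\<rho> > 0"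
    and "card (ball_idx X x \<rho>) \<ge> 1"
  shows "post_var k sn2 X x \<le>
    (k x x * sn2 + real (card (ball_idx X x \<rho>)) * xi k X x \<rho>) /
    (real (card (ball_idx X x \<rho>)) * kmax_ball k X x \<rho> + sn2)"
proof -
  define B where "B = ball_idx X x \<rho>"
  define KM where "KM = kmax_ball k X x \<rho>"
  obtain i0 where "i0 \<in> B"
    using assms(4) unfolding B_def by fastforce
  have kB: "k (X i) (X j) \<le> KM" if "i \<in> B" "j \<in> B" for i j
    unfolding KM_def kmax_ball_def B_def[symmetric] using that
    by (intro Max_ge finite_image_set2) auto
  have "0 \<le> KM"
    using psd_kernel_diag_nonneg[OF assms(1), of "X i0"] kB[OF \<open>i0 \<in> B\<close> \<open>i0 \<in> B\<close>] by linarith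
  have "Min {(k (X i) x)\<^sup>2 | i. i \<in> B} \<in> {(k (X i) x)\<^sup>2 | i. i \<in> B}"
    using \<open>i0 \<in> B\<close> by (intro Min_in) auto
  then obtain i1 where "i1 \<in> B" and min_eq: "Min {(k (X i) x)\<^sup>2 | i. i \<in> B} = (k (X i1) x)\<^sup>2"
    by blast
  define \<mu> where "\<mu> = \<bar>k (X i1) x\<bar>"
  have "0 \<le> \<mu>"
    unfolding \<mu>_def by simp
  have \<mu>B: "\<mu> \<le> \<bar>k x (X i)\<bar>" if "i \<in> B" for i
  proof -
    have "(k (X i1) x)\<^sup>2 \<le> (k (X i) x)\<^sup>2"
      unfolding min_eq[symmetric] using that by (intro Min_le) auto
    then show ?thesis
      unfolding \<mu>_def by (simp add: abs_le_square_iff psd_kernel_sym[OF assms(1), of x])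
  qed
  have "post_var k sn2 X x \<le> k x x - card B * \<mu>\<^sup>2 / (card B * KM + sn2)"
    by (rule post_var_le_ball_bound[where B = B, OF assms(1,2) kB \<open>0 \<le> KM\<close> \<open>0 \<le> \<mu>\<close> \<mu>B])
  also have "\<dots> = (k x x * sn2 + card B * (k x x * KM - \<mu>\<^sup>2)) / (card B * KM + sn2)"
    using \<open>0 \<le> KM\<close> \<open>sn2 > 0\<close> add_nonneg_pos[of "card B * KM" sn2] by (simp add: field_simps)
  also have "k x x * KM - \<mu>\<^sup>2 = xi k X x \<rho>"
    unfolding xi_def KM_def B_def[symmetric] min_eq \<mu>_def by simp
  finally show ?thesis
    unfolding B_def KM_def .
qed

end
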